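(* Let $p,q\in(0,1)$ be parameters of two Bernoulli distributions $[p,1-p]$ and $[q,1-q]$. Let $m\ge1$ be an integer such that $mp$ and $mq$ are integers. Define $l_{p2q}=\binom{m}{mp}q^{mp}(1-q)^{m-mp}$, the likelihood of observing empirical distribution $p$ from $m$ samples when the true distribution is $q$. Define $l_{q2p}=\binom{m}{mq}p^{mq}(1-p)^{m-mq}$ analogously. If $l_{p2q}>l_{q2p}$, then $D_{\chi^2}(p,q)<D_{\chi^2}(q,p)$.
   Context: For Bernoulli parameters $p,q\in(0,1)$, the $\chi^2$ divergence is $D_{\chi^2}(p,q)=\frac{p^2}{q}+\frac{(1-p)^2}{1-q}-1=\frac{(p-q)^2}{q(1-q)}$. *)

theory Defs
  imports Complex_Main
begin

definition chi2_div :: "real \<Rightarrow> real \<Rightarrow> real" where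
  "chi2_div p q = p^2 / q + (1 - p)^2 / (1 - q) - 1"

definition lik :: "nat \<Rightarrow> nat \<Rightarrow> real \<Rightarrow> real" where
  "lik m k q = real (m choose k) * q ^ k * (1 - q) ^ (m - k)"

end

(* Let KL(p||q) be the Kullback-Leibler divergence of Bernoulli distributions. If k = m p then
   lik m k q = lik m k p * exp (- m KL(p||q)), and lik m k p = lik m k (k/m) is the peak value of
   the likelihood, which grows as k moves away from m/2 (this reduces to the monotonicity of
   (1 + 1/n)^n). Moreover KL(q||p) <= KL(p||q) whenever q is farther from 1/2 than p, by a
   derivative analysis of the gap KL(x||p) - KL(p||x), which vanishes at x = p and x = 1 - p.
   So if q (1 - q) <= p (1 - p), both factors give lik m a q <= lik m b p. Hence the hypothesis
   forces p (1 - p) < q (1 - q), and since chi2(p,q) = (p - q)^2 / (q (1 - q)) this is the claim. *)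

theory Submission
  imports Defs
begin

definition bernoulli_kl :: "real \<Rightarrow> real \<Rightarrow> real" where
  "bernoulli_kl p q = p * (ln p - ln q) + (1 - p) * (ln (1 - p) - ln (1 - q))"

lemma bernoulli_kl_complement: "bernoulli_kl (1 - p) (1 - q) = bernoulli_kl p q"
  unfolding bernoulli_kl_def by (simp add: algebra_simps)

definition kl_gap_deriv :: "real \<Rightarrow> real \<Rightarrow> real" where
  "kl_gap_deriv p x = ln x - ln p - (ln (1 - x) - ln (1 - p)) + p / x - (1 - p) / (1 - x)"

lemma has_real_derivative_kl_gap:
  assumes "0 < x" "x < 1"
  shows "((\<lambda>x. bernoulli_kl x p - bernoulli_kl p x) has_real_derivative kl_gap_deriv p x)
           (at x)"
  unfolding bernoulli_kl_def kl_gap_deriv_def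
  by (rule derivative_eq_intros refl | use assms in simp)+

lemma has_real_derivative_kl_gap_deriv:
  assumes "0 < x" "x < 1"
  shows "(kl_gap_deriv p has_real_derivative (x - p) * (1 - 2 * x) / (x * (1 - x))^2) (at x)"
proof -
  have "(kl_gap_deriv p has_real_derivative 1/x + 1/(1-x) - p/x^2 - (1-p)/(1-x)^2) (at x)"
    unfolding kl_gap_deriv_def
    by (rule derivative_eq_intros refl | use assms in \<open>simp add: power2_eq_square\<close>)+
  moreover have "1/x + 1/(1-x) - p/x^2 - (1-p)/(1-x)^2 = (x - p) * (1 - 2 * x) / (x * (1 - x))^2"
  proof -
    have "x \<noteq> 0" "1 - x \<noteq> 0" using assms by auto
    then show ?thesis by (simp add: field_simps) (simp add: power2_eq_square algebra_simps)
  qed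
  ultimately show ?thesis by simp
qed

lemma two_ln_le_diff_inverse:
  fixes t :: real assumes "1 \<le> t" shows "2 * ln t \<le> t - 1 / t"
proof -
  have "(\<lambda>t. t - 1/t - 2 * ln t) 1 \<le> (\<lambda>t. t - 1/t - 2 * ln t) t"
  proof (rule DERIV_nonneg_imp_nondecreasing[OF assms])
    fix x :: real assume x: "1 \<le> x" "x \<le> t"
    have "((\<lambda>t. t - 1/t - 2 * ln t) has_real_derivative (1 - 1/x)^2) (at x)"
      using x by (auto intro!: derivative_eq_intros simp: field_simps power2_eq_square)
    then show "\<exists>y. ((\<lambda>t. t - 1/t - 2 * ln t) has_real_derivative y) (at x) \<and> 0 \<le> y"
      by auto
  qed
  then show ?thesis by simp
qed

lemma kl_gap_deriv_reflection_nonpos: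
  assumes "0 < p" "p \<le> 1/2" shows "kl_gap_deriv p (1 - p) \<le> 0"
proof -
  define t where "t = (1 - p) / p"
  have "1 \<le> t" using assms by (simp add: t_def field_simps)
  moreover have "kl_gap_deriv p (1 - p) = 2 * ln t - (t - 1 / t)"
    using assms by (simp add: kl_gap_deriv_def t_def ln_div field_simps)
  ultimately show ?thesis using two_ln_le_diff_inverse by simp
qed

lemma bernoulli_kl_le_swap_below:
  assumes "0 < q" "q \<le> p" "p \<le> 1/2"
  shows "bernoulli_kl q p \<le> bernoulli_kl p q"
proof -
  have "kl_gap_deriv p p \<le> kl_gap_deriv p x" if "q \<le> x" "x \<le> p" for x
  proof (rule DERIV_nonpos_imp_nonincreasing[OF \<open>x \<le> p\<close>])
    fix y assume "x \<le> y" "y \<le> p"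
    then have "0 < y" "y < 1" "(y - p) * (1 - 2 * y) / (y * (1 - y))^2 \<le> 0"
      using that assms by (auto intro!: divide_nonpos_nonneg mult_nonpos_nonneg)
    then show "\<exists>d. (kl_gap_deriv p has_real_derivative d) (at y) \<and> d \<le> 0"
      using has_real_derivative_kl_gap_deriv by blast
  qed
  then have deriv_nonneg: "0 \<le> kl_gap_deriv p x" if "q \<le> x" "x \<le> p" for x
    using that assms by (simp add: kl_gap_deriv_def)
  have "(\<lambda>x. bernoulli_kl x p - bernoulli_kl p x) q
      \<le> (\<lambda>x. bernoulli_kl x p - bernoulli_kl p x) p"
  proof (rule DERIV_nonneg_imp_nondecreasing[OF \<open>q \<le> p\<close>])
    fix x assume "q \<le> x" "x \<le> p"
    moreover from this have "0 < x" "x < 1" using assms by auto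
    ultimately show "\<exists>d. ((\<lambda>x. bernoulli_kl x p - bernoulli_kl p x) has_real_derivative d) (at x)
        \<and> 0 \<le> d"
      using has_real_derivative_kl_gap deriv_nonneg by blast
  qed
  then show ?thesis by simp
qed

lemma bernoulli_kl_le_swap_above:
  assumes "0 < p" "p \<le> 1/2" "1 - p \<le> q" "q < 1"
  shows "bernoulli_kl q p \<le> bernoulli_kl p q"
proof -
  have "kl_gap_deriv p x \<le> kl_gap_deriv p (1 - p)" if "1 - p \<le> x" "x \<le> q" for x
  proof (rule DERIV_nonpos_imp_nonincreasing[OF \<open>1 - p \<le> x\<close>])
    fix y assume "1 - p \<le> y" "y \<le> x"
    then have "0 < y" "y < 1" "(y - p) * (1 - 2 * y) / (y * (1 - y))^2 \<le> 0"
      using that assms by (auto intro!: divide_nonpos_nonneg mult_nonneg_nonpos)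
    then show "\<exists>d. (kl_gap_deriv p has_real_derivative d) (at y) \<and> d \<le> 0"
      using has_real_derivative_kl_gap_deriv by blast
  qed
  then have deriv_nonpos: "kl_gap_deriv p x \<le> 0" if "1 - p \<le> x" "x \<le> q" for x
    using that kl_gap_deriv_reflection_nonpos[OF assms(1,2)] by fastforce
  have "(\<lambda>x. bernoulli_kl x p - bernoulli_kl p x) q
      \<le> (\<lambda>x. bernoulli_kl x p - bernoulli_kl p x) (1 - p)"
  proof (rule DERIV_nonpos_imp_nonincreasing[OF \<open>1 - p \<le> q\<close>])
    fix x assume "1 - p \<le> x" "x \<le> q"
    moreover from this have "0 < x" "x < 1" using assms by auto
    ultimately show "\<exists>d. ((\<lambda>x. bernoulli_kl x p - bernoulli_kl p x) has_real_derivative d) (at x)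
        \<and> d \<le> 0"
      using has_real_derivative_kl_gap deriv_nonpos by blast
  qed
  also have "\<dots> = 0"
    by (simp add: bernoulli_kl_def algebra_simps)
  finally show ?thesis by simp
qed

lemma bernoulli_kl_le_swap:
  assumes "0 < p" "p < 1" "0 < q" "q < 1" "q * (1 - q) \<le> p * (1 - p)"
  shows "bernoulli_kl q p \<le> bernoulli_kl p q"
proof -
  have "(p - 1/2)^2 \<le> (q - 1/2)^2"
    using assms(5) by (simp add: power2_eq_square algebra_simps)
  then have "\<bar>p - 1/2\<bar> \<le> \<bar>q - 1/2\<bar>"
    by (simp only: abs_le_square_iff)
  then consider "p \<le> 1/2" "q \<le> p" | "p \<le> 1/2" "1 - p \<le> q"
    | "1/2 \<le> p" "p \<le> q" | "1/2 \<le> p" "q \<le> 1 - p"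
    by linarith
  then show ?thesis
  proof cases
    case 1
    then show ?thesis using bernoulli_kl_le_swap_below assms by blast
  next
    case 2
    then show ?thesis using bernoulli_kl_le_swap_above assms by blast
  next
    case 3
    then show ?thesis using bernoulli_kl_le_swap_below[of "1 - q" "1 - p"] assms
      by (simp add: bernoulli_kl_complement)
  next
    case 4
    then show ?thesis using bernoulli_kl_le_swap_above[of "1 - p" "1 - q"] assms
      by (simp add: bernoulli_kl_complement)
  qed
qed

lemma one_plus_inverse_power_le_Suc:
  "(1 + 1 / real n) ^ n \<le> (1 + 1 / real (Suc n)) ^ Suc n"
proof (cases "n = 0")
  case False
  define x where "x = real n + 1"
  define r where "r = (x - 1) / x"
  define s where "s = (x + 1) / x"
  have n_eq: "real n = x - 1" "real (Suc n) = x" by (simp_all add: x_def)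
  have "1 < x" using False by (simp add: x_def)
  then have r_pos: "0 < r" by (simp add: r_def)
  have "1 + real (Suc n) * (- 1 / x^2) \<le> (1 + - 1 / x^2) ^ Suc n"
    using \<open>1 < x\<close> by (intro Bernoulli_inequality) (simp add: field_simps)
  moreover have "1 + real (Suc n) * (- 1 / x^2) = r" "1 + - 1 / x^2 = r * s"
    using \<open>1 < x\<close> by (simp_all add: n_eq r_def s_def field_simps power2_eq_square)
  ultimately have "r * 1 \<le> r * (r ^ n * s ^ Suc n)"
    by (simp add: power_mult_distrib mult_ac)
  then have "1 \<le> r ^ n * s ^ Suc n"
    using r_pos by (simp only: mult_le_cancel_left_pos)
  then have "(1 / r) ^ n \<le> s ^ Suc n"
    using r_pos by (simp add: power_one_over divide_simps mult.commute)
  moreover have "1 + 1 / real n = 1 / r" "1 + 1 / real (Suc n) = s"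
    using \<open>1 < x\<close> by (simp_all add: n_eq r_def s_def field_simps)
  ultimately show ?thesis by simp
qed simp

lemma incseq_one_plus_inverse_power: "incseq (\<lambda>n. (1 + 1 / real n) ^ n)"
  by (rule incseq_SucI) (rule one_plus_inverse_power_le_Suc)

(* (1 + 1/k)^k <= (1 + 1/n)^n with the denominators cleared *)
lemma Suc_power_le:
  fixes k n :: nat
  assumes "k \<le> n"
  shows "real (Suc k) ^ k * real n ^ n \<le> real k ^ k * real (Suc n) ^ n"
proof -
  have Suc_power: "real (Suc j) ^ j = real j ^ j * (1 + 1 / real j) ^ j" for j :: nat
    by (cases "j = 0") (simp_all add: power_mult_distrib[symmetric] field_simps)
  have "(1 + 1 / real k) ^ k \<le> (1 + 1 / real n) ^ n"
    using incseq_one_plus_inverse_power assms by (rule incseqD)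
  then have "real k ^ k * (1 + 1 / real k) ^ k * real n ^ n
      \<le> real k ^ k * ((1 + 1 / real n) ^ n * real n ^ n)"
    by (simp only: mult.assoc) (intro mult_left_mono mult_right_mono; simp)
  then show ?thesis
    by (simp only: Suc_power[of k] Suc_power[of n] mult.commute[of "real n ^ n"])
qed

definition scaled_max_lik :: "nat \<Rightarrow> nat \<Rightarrow> real" where
  "scaled_max_lik m k = real (m choose k) * real k ^ k * real (m - k) ^ (m - k)"

lemma lik_at_frequency:
  assumes "k \<le> m" "0 < m"
  shows "lik m k (real k / real m) = scaled_max_lik m k / real m ^ m"
proof -
  have "1 - real k / real m = real (m - k) / real m"
    using assms by (simp add: of_nat_diff field_simps)
  moreover have "real m ^ k * real m ^ (m - k) = real m ^ m"
    using assms by (simp add: power_add[symmetric])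
  ultimately show ?thesis
    by (simp add: lik_def scaled_max_lik_def power_divide)
qed

lemma scaled_max_lik_Suc_le:
  assumes "2 * k + 1 \<le> m"
  shows "scaled_max_lik m (Suc k) \<le> scaled_max_lik m k"
proof -
  define n where "n = m - Suc k"
  have m_minus: "m - k = Suc n" "m - Suc k = n" "k \<le> n"
    using assms by (auto simp: n_def)
  have choose_Suc: "real (m choose Suc k) * real (Suc k) = real (m choose k) * real (Suc n)"
  proof -
    have "Suc k * (m choose Suc k) = m * (m - 1 choose k)"
      using binomial_absorption[of k m] by simp
    also have "\<dots> = (m - k) * (m choose k)"
      using binomial_absorb_comp[of m k] by simp
    finally show ?thesis
      using m_minus by (metis of_nat_mult mult.commute)
  qed
  have "scaled_max_lik m (Suc k)
      = real (m choose Suc k) * real (Suc k) * (real (Suc k) ^ k * real n ^ n)"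
    by (simp add: scaled_max_lik_def m_minus mult_ac)
  also have "\<dots> = real (m choose k) * real (Suc n) * (real (Suc k) ^ k * real n ^ n)"
    by (simp only: choose_Suc)
  also have "\<dots> \<le> real (m choose k) * real (Suc n) * (real k ^ k * real (Suc n) ^ n)"
    using Suc_power_le[OF \<open>k \<le> n\<close>] by (intro mult_left_mono) auto
  also have "\<dots> = scaled_max_lik m k"
    by (simp add: scaled_max_lik_def m_minus mult_ac)
  finally show ?thesis .
qed

lemma scaled_max_lik_antimono:
  assumes "i \<le> j" "2 * j \<le> m + 1"
  shows "scaled_max_lik m j \<le> scaled_max_lik m i"
  using assms
proof (induction j rule: dec_induct)
  case (step j)
  then have "scaled_max_lik m (Suc j) \<le> scaled_max_lik m j"
    by (intro scaled_max_lik_Suc_le) simp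
  with step show ?case by simp
qed simp

lemma scaled_max_lik_symmetric:
  assumes "k \<le> m"
  shows "scaled_max_lik m (m - k) = scaled_max_lik m k"
  using assms binomial_symmetric[OF assms] by (simp add: scaled_max_lik_def mult_ac)

lemma scaled_max_lik_le_if_more_central:
  assumes "a \<le> m" "b \<le> m" "b * (m - b) \<le> a * (m - a)"
  shows "scaled_max_lik m a \<le> scaled_max_lik m b"
proof -
  define a' where "a' = min a (m - a)"
  define b' where "b' = min b (m - b)"
  have half: "2 * a' \<le> m" "2 * b' \<le> m"
    by (simp_all add: a'_def b'_def)
  have "b' * (m - b') \<le> a' * (m - a')"
    using assms by (simp add: a'_def b'_def min_def mult.commute)
  have "b' \<le> a'"
  proof (rule ccontr)
    assume "\<not> b' \<le> a'"
    then have "0 < (int b' - int a') * (int m - int a' - int b')"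
      using half by (intro mult_pos_pos) auto
    also have "\<dots> = int (b' * (m - b')) - int (a' * (m - a'))"
      using half by (simp add: of_nat_diff algebra_simps)
    finally show False using \<open>b' * (m - b') \<le> a' * (m - a')\<close> by linarith
  qed
  then have "scaled_max_lik m a' \<le> scaled_max_lik m b'"
    using half by (simp add: scaled_max_lik_antimono)
  moreover have "scaled_max_lik m a = scaled_max_lik m a'"
    and "scaled_max_lik m b = scaled_max_lik m b'"
    using scaled_max_lik_symmetric assms by (simp_all add: a'_def b'_def min_def)
  ultimately show ?thesis by simp
qed

lemma lik_eq_exp_ln:
  assumes "0 < q" "q < 1"
  shows "lik m k q = real (m choose k) * exp (real k * ln q + real (m - k) * ln (1 - q))"
  using assms by (simp add: lik_def exp_add exp_of_nat_mult)

lemma lik_eq_exp_bernoulli_kl: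
  assumes "0 < p" "p < 1" "0 < q" "q < 1" "real m * p = real k"
  shows "lik m k q = lik m k p * exp (- real m * bernoulli_kl p q)"
proof -
  have "real k \<le> real m"
    using assms by (metis mult_left_le of_nat_0_le_iff less_imp_le)
  then have m_minus_k: "real (m - k) = real m * (1 - p)"
    using assms by (simp add: of_nat_diff algebra_simps)
  have "real k * ln q + real (m - k) * ln (1 - q)
      = real k * ln p + real (m - k) * ln (1 - p) + - real m * bernoulli_kl p q"
    by (simp add: bernoulli_kl_def m_minus_k algebra_simps flip: assms(5))
  then show ?thesis
    using assms(1-4) by (simp only: lik_eq_exp_ln exp_add mult.assoc)
qed

lemma lik_le_if_more_central:
  assumes "0 < p" "p < 1" "0 < q" "q < 1" "0 < m"
    and "real m * p = real a" "real m * q = real b"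
    and "q * (1 - q) \<le> p * (1 - p)"
  shows "lik m a q \<le> lik m b p"
proof -
  have freq: "p = real a / real m" "q = real b / real m"
    using assms by (simp_all add: field_simps)
  have "a \<le> m" "b \<le> m"
    using assms freq by (simp_all add: divide_less_eq)
  have "real (b * (m - b)) = real m ^ 2 * (q * (1 - q))"
       "real (a * (m - a)) = real m ^ 2 * (p * (1 - p))"
    using assms \<open>a \<le> m\<close> \<open>b \<le> m\<close>
    by (simp_all add: of_nat_diff power2_eq_square algebra_simps)
  then have "b * (m - b) \<le> a * (m - a)"
    using assms(8) by (metis mult_left_mono of_nat_le_iff zero_le_power2)
  then have "lik m a p \<le> lik m b q"
    using \<open>a \<le> m\<close> \<open>b \<le> m\<close> assms(5)
    by (simp add: freq lik_at_frequency scaled_max_lik_le_if_more_central divide_right_mono)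
  moreover have "exp (- real m * bernoulli_kl p q) \<le> exp (- real m * bernoulli_kl q p)"
    using bernoulli_kl_le_swap[OF assms(1-4,8)] by (simp add: mult_left_mono)
  moreover have "0 \<le> lik m a p"
    using assms by (simp add: lik_def)
  ultimately have "lik m a p * exp (- real m * bernoulli_kl p q)
      \<le> lik m b q * exp (- real m * bernoulli_kl q p)"
    by (intro mult_mono) auto
  then show ?thesis
    using assms
    by (simp add: lik_eq_exp_bernoulli_kl[of p q m a] lik_eq_exp_bernoulli_kl[of q p m b])
qed

lemma chi2_div_eq:
  assumes "0 < q" "q < 1"
  shows "chi2_div p q = (p - q)^2 / (q * (1 - q))"
proof -
  have "q \<noteq> 0" "1 - q \<noteq> 0" using assms by auto
  then show ?thesis
    by (simp add: chi2_div_def field_simps power2_eq_square)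
qed

lemma chi2_div_less_swap:
  assumes "0 < p" "p < 1" "0 < q" "q < 1" "p * (1 - p) < q * (1 - q)"
  shows "chi2_div p q < chi2_div q p"
proof -
  have "0 < (p - q)^2" using assms by auto
  then have "(p - q)^2 / (q * (1 - q)) < (q - p)^2 / (p * (1 - p))"
    using assms by (simp add: power2_commute divide_strict_left_mono)
  then show ?thesis
    using assms by (simp add: chi2_div_eq)
qed

theorem mainTheorem7:
  fixes p q :: real and m a b :: nat
  assumes "0 < p" "p < 1" "0 < q" "q < 1" "m \<ge> 1"
    and "real m * p = real a" and "real m * q = real b"
    and "lik m a q > lik m b p"
  shows "chi2_div p q < chi2_div q p"
proof -
  have "p * (1 - p) < q * (1 - q)"
  proof (rule ccontr)
    assume "\<not> p * (1 - p) < q * (1 - q)"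
    then have "lik m a q \<le> lik m b p"
      using assms by (intro lik_le_if_more_central) auto
    with assms(8) show False by simp
  qed
  then show ?thesis
    using assms chi2_div_less_swap by blast
qed

end
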